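(* Let $d\in(0,1]$, $\kappa>0$, and let $\tau$ be the solution in $D(L_d)$ of $-L_d\tau=1$ (the limit mean extinction time, vanishing at $(0,0)$ and $(1,1)$). Let $H(z)=-2\big(z\ln z+(1-z)\ln(1-z)\big)$ and define, for $x=(x_1,x_2)\in[0,1]^2$, $$\underline\tau(x)=(d+1)H(z),\qquad z=\frac{x_1+dx_2}{1+d}.$$ Then $\underline\tau$ is a subsolution of $-L_d\tau=1$, i.e. $-L_d\underline\tau\le 1$, and $\underline\tau\le\tau$ on $[0,1]^2$.
   Context: Let $\mathcal D=[0,1]^2$, $M=\begin{pmatrix} d & -d\\ -1 & 1\end{pmatrix}$, and $$L_d u(x)=\frac{x_1(1-x_1)}{2}u_{x_1x_1}(x)+\frac{x_2(1-x_2)}{2d}u_{x_2x_2}(x)-\kappa\, Mx\cdot\nabla u(x).$$ Let $E=\{f\in C(\mathcal D): f(0,0)=f(1,1)=0\}$. For $N$ with $N_2=dN$ an integer, let $N_1=N$, $\delta t=1/N$, $A=\mathrm{Id}-\frac{\kappa}{N}M$, and $$B_N(g)(x)=\sum_{j_1=0}^{N_1}\sum_{j_2=0}^{N_2}\binom{N_1}{j_1}\binom{N_2}{j_2}x_1^{j_1}(1-x_1)^{N_1-j_1}x_2^{j_2}(1-x_2)^{N_2-j_2}\,g\!\left(\tfrac{j_1}{N_1},\tfrac{j_2}{N_2}\right);$$ $D(L_d)=\{f\in E:\ (B_N(f\circ A)-f)/\delta t\to L_d f \text{ in } E\}$. The function $\underline\tau$ is the mean extinction time of the one-patch Wright–Fisher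 diffusion with capacity $(1+d)N$ (no exchange). *)

theory Defs
  imports "HOL-Analysis.Analysis"
begin

definition Dsq :: "(real \<times> real) set" where
  "Dsq = {0..1} \<times> {0..1}"

definition inE :: "(real \<times> real \<Rightarrow> real) \<Rightarrow> bool" where
  "inE f \<longleftrightarrow> continuous_on Dsq f \<and> f (0,0) = 0 \<and> f (1,1) = 0"

definition d1 :: "(real \<times> real \<Rightarrow> real) \<Rightarrow> real \<times> real \<Rightarrow> real" where
  "d1 u x = deriv (\<lambda>t. u (t, snd x)) (fst x)"
definition d2 :: "(real \<times> real \<Rightarrow> real) \<Rightarrow> real \<times> real \<Rightarrow> real" where
  "d2 u x = deriv (\<lambda>t. u (fst x, t)) (snd x)"
definition d11 :: "(real \<times> real \<Rightarrow> real) \<Rightarrow> real \<times> real \<Rightarrow> real" where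
  "d11 u x = deriv (\<lambda>t. deriv (\<lambda>s. u (s, snd x)) t) (fst x)"
definition d22 :: "(real \<times> real \<Rightarrow> real) \<Rightarrow> real \<times> real \<Rightarrow> real" where
  "d22 u x = deriv (\<lambda>t. deriv (\<lambda>s. u (fst x, s)) t) (snd x)"

definition Mmap :: "real \<Rightarrow> real \<times> real \<Rightarrow> real \<times> real" where
  "Mmap d x = (d * fst x - d * snd x, - fst x + snd x)"

definition Ld :: "real \<Rightarrow> real \<Rightarrow> (real \<times> real \<Rightarrow> real) \<Rightarrow> real \<times> real \<Rightarrow> real" where
  "Ld d \<kappa> u x =
     fst x * (1 - fst x) / 2 * d11 u x
   + snd x * (1 - snd x) / (2 * d) * d22 u x
   - \<kappa> * (fst (Mmap d x) * d1 u x + snd (Mmap d x) * d2 u x)"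

definition Amap :: "real \<Rightarrow> real \<Rightarrow> nat \<Rightarrow> real \<times> real \<Rightarrow> real \<times> real" where
  "Amap d \<kappa> N x = (fst x - \<kappa> / real N * fst (Mmap d x), snd x - \<kappa> / real N * snd (Mmap d x))"

definition bern :: "nat \<Rightarrow> nat \<Rightarrow> (real \<times> real \<Rightarrow> real) \<Rightarrow> real \<times> real \<Rightarrow> real" where
  "bern N1 N2 g x =
     (\<Sum>j1\<le>N1. \<Sum>j2\<le>N2.
        real (N1 choose j1) * real (N2 choose j2)
        * fst x ^ j1 * (1 - fst x) ^ (N1 - j1)
        * snd x ^ j2 * (1 - snd x) ^ (N2 - j2)
        * g (real j1 / real N1, real j2 / real N2))"

text \<open>Difference quotient (B_N(f o A) - f) / delta t, with delta t = 1/N, N1 = N, N2 = d N.\<close>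
definition genq :: "real \<Rightarrow> real \<Rightarrow> nat \<Rightarrow> nat \<Rightarrow> (real \<times> real \<Rightarrow> real) \<Rightarrow> real \<times> real \<Rightarrow> real" where
  "genq d \<kappa> N N2 f x = (bern N N2 (f \<circ> Amap d \<kappa> N) x - f x) * real N"

definition Hfun :: "real \<Rightarrow> real" where
  "Hfun z = - 2 * (z * ln z + (1 - z) * ln (1 - z))"

definition taulow :: "real \<Rightarrow> real \<times> real \<Rightarrow> real" where
  "taulow d x = (d + 1) * Hfun ((fst x + d * snd x) / (1 + d))"

end

theory Submission
  imports Defs "HOL-Real_Asymp.Real_Asymp"
begin

(*
  Write z = (x1 + d x2) / (1 + d), so that taulow = (1 + d) H(z). The vector (1, d) is a left
  null vector of M, so neither the drift of L_d nor the map A changes z. Hence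
  L_d taulow = -(x1 (1 - x1) + d x2 (1 - x2)) / ((1 + d) z (1 - z)), and concavity of
  t (1 - t) bounds the numerator by (1 + d) z (1 - z): this is -L_d taulow <= 1.

  For taulow <= tau we compare through the discrete generators, whose action on tau is
  known by hypothesis. On taulow the generator at x equals D (E H(U) - H(z)), where
  D = N + N2 and U = (J1 + J2) / D for independent J1 ~ Bin(N, x1), J2 ~ Bin(N2, x2).
  A quartic lower bound for H around z (from ln t <= (t-1) - (t-1)^2/2 + (t-1)^3/3) and
  the first, second and fourth binomial moments give a lower bound -(1 + delta) - O(1/N).
  So (1 - eta) taulow - tau has a positive discrete generator at every point other than
  the two corners, for suitable large N. That is impossible at a positive maximum, because
  B_N(f o A) averages f over points of the square; letting eta -> 0 gives the claim.
*)

section \<open>Binomial averages\<close>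

definition binom_avg :: "nat \<Rightarrow> real \<Rightarrow> (nat \<Rightarrow> real) \<Rightarrow> real" where
  "binom_avg n p f = (\<Sum>j\<le>n. real (n choose j) * p ^ j * (1 - p) ^ (n - j) * f j)"

lemma binom_avg_Suc:
  "binom_avg (Suc n) p f = binom_avg n p (\<lambda>j. p * f (Suc j) + (1 - p) * f j)"
proof -
  define w where "w = (\<lambda>m j. real (m choose j) * p ^ j * (1 - p) ^ (m - j))"
  have pascal: "w (Suc n) (Suc j) = p * w n j + real (n choose Suc j) * p ^ Suc j * (1 - p) ^ (n - j)"
    for j by (simp add: w_def algebra_simps)
  have tail: "w (Suc n) 0 * f 0 + (\<Sum>j\<le>n. real (n choose Suc j) * p ^ Suc j * (1 - p) ^ (n - j) * f (Suc j))
      = (\<Sum>j\<le>n. (1 - p) * w n j * f j)"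
  proof -
    have "(\<Sum>j\<le>n. real (n choose Suc j) * p ^ Suc j * (1 - p) ^ (n - j) * f (Suc j))
        = (\<Sum>j<n. real (n choose Suc j) * p ^ Suc j * (1 - p) ^ (n - j) * f (Suc j))"
      by (simp add: lessThan_Suc_atMost[symmetric])
    moreover have "w (Suc n) 0 * f 0 + \<dots> = (\<Sum>j<Suc n. real (n choose j) * p ^ j * (1 - p) ^ (Suc n - j) * f j)"
      unfolding w_def by (subst sum.lessThan_Suc_shift) simp
    moreover have "\<dots> = (\<Sum>j\<le>n. (1 - p) * w n j * f j)"
      unfolding w_def lessThan_Suc_atMost by (intro sum.cong refl) (simp add: Suc_diff_le)
    ultimately show ?thesis by simp
  qed
  have "binom_avg (Suc n) p f = w (Suc n) 0 * f 0 + (\<Sum>j\<le>n. w (Suc n) (Suc j) * f (Suc j))"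
    unfolding binom_avg_def w_def by (rule sum.atMost_Suc_shift)
  also have "\<dots> = (\<Sum>j\<le>n. p * w n j * f (Suc j)) + (\<Sum>j\<le>n. (1 - p) * w n j * f j)"
    unfolding pascal tail[symmetric] by (simp add: sum.distrib algebra_simps)
  also have "\<dots> = binom_avg n p (\<lambda>j. p * f (Suc j) + (1 - p) * f j)"
    unfolding binom_avg_def w_def sum.distrib[symmetric] by (intro sum.cong refl) (simp add: algebra_simps)
  finally show ?thesis .
qed

lemma binom_avg_add: "binom_avg n p (\<lambda>j. f j + g j) = binom_avg n p f + binom_avg n p g"
  unfolding binom_avg_def by (simp add: algebra_simps sum.distrib)

lemma binom_avg_diff: "binom_avg n p (\<lambda>j. f j - g j) = binom_avg n p f - binom_avg n p g"
  unfolding binom_avg_def by (simp add: algebra_simps sum_subtractf)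

lemma binom_avg_cmult: "binom_avg n p (\<lambda>j. c * f j) = c * binom_avg n p f"
  unfolding binom_avg_def by (simp add: algebra_simps sum_distrib_left)

lemma binom_avg_const: "binom_avg n p (\<lambda>j. c) = c"
proof -
  have "binom_avg n p (\<lambda>j. c) = c * (\<Sum>j\<le>n. real (n choose j) * p ^ j * (1 - p) ^ (n - j))"
    unfolding binom_avg_def by (simp add: algebra_simps sum_distrib_left)
  also have "(\<Sum>j\<le>n. real (n choose j) * p ^ j * (1 - p) ^ (n - j)) = (p + (1 - p)) ^ n"
    by (subst binomial_ring) (simp add: atLeast0AtMost)
  finally show ?thesis by simp
qed

lemma binom_avg_mono:
  "0 \<le> p \<Longrightarrow> p \<le> 1 \<Longrightarrow> (\<And>j. j \<le> n \<Longrightarrow> f j \<le> g j) \<Longrightarrow> binom_avg n p f \<le> binom_avg n p g"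
  unfolding binom_avg_def by (intro sum_mono mult_left_mono) auto

lemma binom_avg_central_moments:
  fixes p :: real
  defines "q \<equiv> 1 - p"
  shows "binom_avg n p (\<lambda>j. real j - real n * p) = 0
    \<and> binom_avg n p (\<lambda>j. (real j - real n * p)^2) = real n * p * q
    \<and> binom_avg n p (\<lambda>j. (real j - real n * p)^3) = real n * p * q * (q - p)
    \<and> binom_avg n p (\<lambda>j. (real j - real n * p)^4) = real n * p * q + 3 * real n * (real n - 2) * p^2 * q^2"
proof (induction n)
  case 0
  show ?case by (simp add: binom_avg_def)
next
  case (Suc n)
  define e where "e = (\<lambda>j. real j - real n * p)"
  have IH1: "binom_avg n p e = 0" and IH2: "binom_avg n p (\<lambda>j. e j ^ 2) = real n * p * q"
    and IH3: "binom_avg n p (\<lambda>j. e j ^ 3) = real n * p * q * (q - p)"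
    and IH4: "binom_avg n p (\<lambda>j. e j ^ 4) = real n * p * q + 3 * real n * (real n - 2) * p^2 * q^2"
    using Suc.IH unfolding e_def by auto
  \<comment> \<open>one more trial shifts the deviation by \<open>1 - p\<close> with probability \<open>p\<close> and by \<open>-p\<close> otherwise\<close>
  have step1: "(\<lambda>j. p * (real (Suc j) - real (Suc n) * p) + (1 - p) * (real j - real (Suc n) * p)) = e"
    by (rule ext) (simp add: e_def algebra_simps)
  have step2: "(\<lambda>j. p * (real (Suc j) - real (Suc n) * p)^2 + (1 - p) * (real j - real (Suc n) * p)^2)
      = (\<lambda>j. e j ^ 2 + p * q)"
    by (rule ext) (simp add: e_def q_def power2_eq_square algebra_simps)
  have step3: "(\<lambda>j. p * (real (Suc j) - real (Suc n) * p)^3 + (1 - p) * (real j - real (Suc n) * p)^3)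
      = (\<lambda>j. e j ^ 3 + (3 * p * q) * e j + p * q * (q - p))"
    by (rule ext) (simp add: e_def q_def power3_eq_cube algebra_simps)
  have step4: "(\<lambda>j. p * (real (Suc j) - real (Suc n) * p)^4 + (1 - p) * (real j - real (Suc n) * p)^4)
      = (\<lambda>j. e j ^ 4 + (6 * p * q) * e j ^ 2 + (4 * p * q * (q - p)) * e j + p * q * (q^3 + p^3))"
    by (rule ext) (simp add: e_def q_def power4_eq_xxxx power3_eq_cube power2_eq_square algebra_simps)
  show ?case
    unfolding binom_avg_Suc step1 step2 step3 step4
    by (simp only: binom_avg_add binom_avg_const binom_avg_cmult IH1 IH2 IH3 IH4)
      (simp add: q_def power3_eq_cube power2_eq_square algebra_simps)
qed

lemma binom_avg_fourth_moment_le: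
  assumes "0 \<le> p" "p \<le> 1"
  shows "binom_avg n p (\<lambda>j. (real j - real n * p)^4) \<le> real n ^ 2"
proof -
  define t where "t = p * (1 - p)"
  have t0: "0 \<le> t"
    using assms by (simp add: t_def)
  have t1: "t \<le> 1/4"
    using zero_le_square[of "p - 1/2"] by (simp add: t_def power2_eq_square algebra_simps)
  have "binom_avg n p (\<lambda>j. (real j - real n * p)^4) = real n * t + 3 * (real n * (real n - 2)) * t^2"
    using binom_avg_central_moments[of n p] by (simp add: t_def power2_eq_square algebra_simps)
  also have "\<dots> \<le> real n * t + 3 * (real n * real n) * t^2"
    by (intro add_left_mono mult_right_mono) (auto simp: algebra_simps)
  also have "\<dots> \<le> real n * (1/4) + 3 * (real n * real n) * (1/4)^2"
    using t0 t1 by (intro add_mono mult_left_mono power_mono) auto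
  also have "\<dots> \<le> real n ^ 2"
  proof -
    have "real n \<le> real n * real n"
      using le_square[of n] by (metis of_nat_le_iff of_nat_mult)
    then show ?thesis by (simp add: power2_eq_square)
  qed
  finally show ?thesis .
qed

definition binom_avg2 :: "nat \<Rightarrow> nat \<Rightarrow> real \<times> real \<Rightarrow> (nat \<Rightarrow> nat \<Rightarrow> real) \<Rightarrow> real" where
  "binom_avg2 N1 N2 x g = binom_avg N1 (fst x) (\<lambda>j1. binom_avg N2 (snd x) (g j1))"

lemma bern_eq_binom_avg2:
  "bern N1 N2 G x = binom_avg2 N1 N2 x (\<lambda>j1 j2. G (real j1 / real N1, real j2 / real N2))"
  unfolding bern_def binom_avg2_def binom_avg_def by (simp add: sum_distrib_left algebra_simps)

lemma binom_avg2_add: "binom_avg2 N1 N2 x (\<lambda>a b. f a b + g a b) = binom_avg2 N1 N2 x f + binom_avg2 N1 N2 x g"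
  by (simp add: binom_avg2_def binom_avg_add)

lemma binom_avg2_diff: "binom_avg2 N1 N2 x (\<lambda>a b. f a b - g a b) = binom_avg2 N1 N2 x f - binom_avg2 N1 N2 x g"
  by (simp add: binom_avg2_def binom_avg_diff)

lemma binom_avg2_cmult: "binom_avg2 N1 N2 x (\<lambda>a b. c * f a b) = c * binom_avg2 N1 N2 x f"
  by (simp add: binom_avg2_def binom_avg_cmult)

lemma binom_avg2_const: "binom_avg2 N1 N2 x (\<lambda>a b. c) = c"
  by (simp add: binom_avg2_def binom_avg_const)

lemma binom_avg2_mono:
  assumes "x \<in> Dsq" and "\<And>a b. a \<le> N1 \<Longrightarrow> b \<le> N2 \<Longrightarrow> f a b \<le> g a b"
  shows "binom_avg2 N1 N2 x f \<le> binom_avg2 N1 N2 x g"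
  using assms unfolding binom_avg2_def Dsq_def by (auto intro!: binom_avg_mono)

lemma binom_avg2_prod:
  "binom_avg2 N1 N2 x (\<lambda>a b. f a * g b) = binom_avg N1 (fst x) f * binom_avg N2 (snd x) g"
  unfolding binom_avg2_def binom_avg_cmult by (simp add: binom_avg_def sum_distrib_right algebra_simps)

lemma binom_avg2_fst: "binom_avg2 N1 N2 x (\<lambda>a b. f a) = binom_avg N1 (fst x) f"
  by (simp add: binom_avg2_def binom_avg_const)

lemma binom_avg2_snd: "binom_avg2 N1 N2 x (\<lambda>a b. g b) = binom_avg N2 (snd x) g"
  by (simp add: binom_avg2_def binom_avg_const)

lemma fourth_power_add_le: "((a::real) + b)^4 \<le> 8 * (a^4 + b^4)"
proof -
  have "8 * (a^4 + b^4) - (a + b)^4 = (a - b)^2 * (5 * (a + b)^2 + 2 * a^2 + 2 * b^2)"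
    by (simp add: power2_eq_square power4_eq_xxxx algebra_simps)
  moreover have "0 \<le> (a - b)^2 * (5 * (a + b)^2 + 2 * a^2 + 2 * b^2)"
    by simp
  ultimately show ?thesis by linarith
qed

lemma binom_avg2_sum_deviation_moments:
  fixes N1 N2 :: nat and x :: "real \<times> real"
  defines "S \<equiv> \<lambda>j1 j2. (real j1 - real N1 * fst x) + (real j2 - real N2 * snd x)"
  shows "binom_avg2 N1 N2 x S = 0"
    and "binom_avg2 N1 N2 x (\<lambda>j1 j2. (S j1 j2)^2)
           = real N1 * fst x * (1 - fst x) + real N2 * snd x * (1 - snd x)"
    and "x \<in> Dsq \<Longrightarrow> binom_avg2 N1 N2 x (\<lambda>j1 j2. (S j1 j2)^4) \<le> 8 * (real N1 ^ 2 + real N2 ^ 2)"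
proof -
  define e1 where "e1 = (\<lambda>j. real j - real N1 * fst x)"
  define e2 where "e2 = (\<lambda>j. real j - real N2 * snd x)"
  have S: "S = (\<lambda>j1 j2. e1 j1 + e2 j2)"
    by (simp add: S_def e1_def e2_def)
  note m1 = binom_avg_central_moments[of N1 "fst x"] and m2 = binom_avg_central_moments[of N2 "snd x"]
  show "binom_avg2 N1 N2 x S = 0"
    using m1 m2 by (simp add: S binom_avg2_add binom_avg2_fst binom_avg2_snd e1_def e2_def)
  have "(\<lambda>j1 j2. (S j1 j2)^2) = (\<lambda>j1 j2. e1 j1 ^ 2 + (2 * (e1 j1 * e2 j2) + e2 j2 ^ 2))"
    by (simp add: S power2_eq_square algebra_simps)
  then show "binom_avg2 N1 N2 x (\<lambda>j1 j2. (S j1 j2)^2)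
           = real N1 * fst x * (1 - fst x) + real N2 * snd x * (1 - snd x)"
    using m1 m2 by (simp add: binom_avg2_add binom_avg2_cmult binom_avg2_prod binom_avg2_fst
        binom_avg2_snd e1_def e2_def)
  assume x: "x \<in> Dsq"
  then have p: "0 \<le> fst x" "fst x \<le> 1" "0 \<le> snd x" "snd x \<le> 1"
    by (auto simp: Dsq_def)
  have "binom_avg2 N1 N2 x (\<lambda>j1 j2. (S j1 j2)^4)
      \<le> binom_avg2 N1 N2 x (\<lambda>j1 j2. 8 * (e1 j1 ^ 4 + e2 j2 ^ 4))"
    unfolding S by (intro binom_avg2_mono x fourth_power_add_le)
  also have "\<dots> = 8 * (binom_avg N1 (fst x) (\<lambda>j. e1 j ^ 4) + binom_avg N2 (snd x) (\<lambda>j. e2 j ^ 4))"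
    by (simp add: binom_avg2_cmult binom_avg2_add binom_avg2_fst binom_avg2_snd)
  also have "\<dots> \<le> 8 * (real N1 ^ 2 + real N2 ^ 2)"
    using binom_avg_fourth_moment_le[of "fst x" N1] binom_avg_fourth_moment_le[of "snd x" N2] p
    by (simp add: e1_def e2_def)
  finally show "binom_avg2 N1 N2 x (\<lambda>j1 j2. (S j1 j2)^4) \<le> 8 * (real N1 ^ 2 + real N2 ^ 2)" .
qed

section \<open>The entropy function\<close>

lemma ln_le_cubic:
  fixes t :: real
  assumes "0 < t"
  shows "ln t \<le> (t - 1) - (t - 1)^2 / 2 + (t - 1)^3 / 3"
proof -
  define g where "g s = (s - 1) - (s - 1)^2 / 2 + (s - 1)^3 / 3 - ln s" for s :: real
  have g': "(g has_real_derivative (s - 1)^3 / s) (at s)" if "0 < s" for s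
  proof -
    have "(g has_real_derivative 1 - (s - 1) + (s - 1)^2 - 1 / s) (at s)"
      unfolding g_def using that by (auto intro!: derivative_eq_intros simp: power2_eq_square field_simps)
    moreover have "1 - (s - 1) + (s - 1)^2 - 1 / s = (s - 1)^3 / s"
      using that by (simp add: field_simps power2_eq_square power3_eq_cube)
    ultimately show ?thesis by simp
  qed
  have "g 1 \<le> g t"
  proof (cases "1 \<le> t")
    case True
    show ?thesis
    proof (rule DERIV_nonneg_imp_nondecreasing[OF True])
      fix s :: real assume "1 \<le> s"
      then show "\<exists>y. (g has_real_derivative y) (at s) \<and> 0 \<le> y"
        using g'[of s] by auto
    qed
  next
    case False
    show ?thesis
    proof (rule DERIV_nonpos_imp_nonincreasing[of t 1 g])
      fix s :: real assume s: "t \<le> s" "s \<le> 1"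
      have "(s - 1)^3 / s \<le> 0"
        using s assms by (intro divide_nonpos_pos) (auto simp: power_le_zero_eq)
      then show "\<exists>y. (g has_real_derivative y) (at s) \<and> y \<le> 0"
        using g'[of s] s assms by auto
    qed (use False in simp)
  qed
  then show ?thesis by (simp add: g_def)
qed

lemma mult_ln_le_quartic:
  fixes u z :: real
  assumes "0 \<le> u" "0 < z"
  shows "u * ln u \<le> u * ln z
           + ((u - z) + (u - z)^2 / (2 * z) - (u - z)^3 / (6 * z^2) + (u - z)^4 / (3 * z^3))"
proof (cases "u = 0")
  case True
  then show ?thesis
    using assms by (simp add: field_simps power2_eq_square power3_eq_cube power4_eq_xxxx)
next
  case False
  then have u: "0 < u" using assms by simp
  define e where "e = (u - z) / z"
  have "ln u = ln z + ln (u / z)"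
    using u assms by (simp add: ln_div)
  also have "ln (u / z) \<le> e - e^2 / 2 + e^3 / 3"
    using ln_le_cubic[of "u / z"] u assms by (simp add: e_def diff_divide_distrib)
  finally have "u * ln u \<le> u * (ln z + (e - e^2 / 2 + e^3 / 3))"
    using u by (simp add: mult_left_mono)
  also have "\<dots> = u * ln z
           + ((u - z) + (u - z)^2 / (2 * z) - (u - z)^3 / (6 * z^2) + (u - z)^4 / (3 * z^3))"
    using assms by (simp add: e_def field_simps power2_eq_square power3_eq_cube power4_eq_xxxx)
  finally show ?thesis .
qed

definition dHfun :: "real \<Rightarrow> real" where
  "dHfun z = - 2 * (ln z - ln (1 - z))"

lemma Hfun_ge_cubic_quartic:
  assumes z: "0 < z" "z < 1" and u: "0 \<le> u" "u \<le> 1"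
  defines "s \<equiv> u - z"
  shows "Hfun z + dHfun z * s - (s^2 / (z * (1 - z))
      + (1 / (3 * (1 - z)^2) - 1 / (3 * z^2)) * s^3 + (2 / (3 * z^3) + 2 / (3 * (1 - z)^3)) * s^4)
    \<le> Hfun u"
proof -
  define w where "w = 1 - z"
  have w: "0 < w" "z + w = 1"
    using z by (auto simp: w_def)
  define PA where "PA = s + s^2 / (2 * z) - s^3 / (6 * z^2) + s^4 / (3 * z^3)"
  define PB where "PB = - s + (- s)^2 / (2 * w) - (- s)^3 / (6 * w^2) + (- s)^4 / (3 * w^3)"
  have A: "u * ln u \<le> u * ln z + PA"
    using mult_ln_le_quartic[of u z] u z(1) unfolding PA_def s_def by simp
  have "1 - u - w = - s"
    by (simp add: s_def w_def)
  then have B: "(1 - u) * ln (1 - u) \<le> (1 - u) * ln w + PB"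
    using mult_ln_le_quartic[of "1 - u" w] u w(1) unfolding PB_def by simp
  have lin: "Hfun z + dHfun z * s = - 2 * (u * ln z) - 2 * ((1 - u) * ln w)"
    by (simp add: Hfun_def dHfun_def s_def w_def algebra_simps)
  have "s^2 / z + s^2 / w = (z + w) * s^2 / (z * w)"
    using z w(1) by (simp add: field_simps)
  then have "s^2 / z + s^2 / w = s^2 / (z * w)"
    using w by simp
  then have "2 * PA + 2 * PB = s^2 / (z * w)
      + (1 / (3 * w^2) - 1 / (3 * z^2)) * s^3 + (2 / (3 * z^3) + 2 / (3 * w^3)) * s^4"
    by (simp add: PA_def PB_def algebra_simps add_divide_distrib diff_divide_distrib)
  moreover have "Hfun u = - 2 * (u * ln u) - 2 * ((1 - u) * ln (1 - u))"
    by (simp add: Hfun_def)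
  ultimately show ?thesis
    using A B lin unfolding w_def by linarith
qed

lemma mult_cube_le_square_plus_fourth:
  fixes a c s \<delta> :: real
  assumes "0 < a" "0 < \<delta>"
  shows "c * s^3 \<le> \<delta> * s^2 / a + c^2 * a / (4 * \<delta>) * s^4"
proof -
  have "0 \<le> (\<delta> * s - c * a * s^2 / 2)^2 / (\<delta> * a)"
    using assms by simp
  also have "\<dots> = \<delta> * s^2 / a + c^2 * a / (4 * \<delta>) * s^4 - c * s^3"
    using assms by (simp add: field_simps power2_eq_square power3_eq_cube power4_eq_xxxx)
  finally show ?thesis
    by simp
qed

lemma Hfun_ge_quartic:
  assumes z: "0 < z" "z < 1" and \<delta>: "0 < \<delta>"
  obtains C where "0 \<le> C"
    and "\<And>u. 0 \<le> u \<Longrightarrow> u \<le> 1 \<Longrightarrow>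
      Hfun z + dHfun z * (u - z) - (1 + \<delta>) * (u - z)^2 / (z * (1 - z)) - C * (u - z)^4 \<le> Hfun u"
proof -
  define c3 where "c3 = 1 / (3 * (1 - z)^2) - 1 / (3 * z^2)"
  define c4 where "c4 = 2 / (3 * z^3) + 2 / (3 * (1 - z)^3)"
  have zw: "0 < z * (1 - z)"
    using z by simp
  show ?thesis
  proof (rule that[of "c4 + c3^2 * (z * (1 - z)) / (4 * \<delta>)"])
    show "0 \<le> c4 + c3^2 * (z * (1 - z)) / (4 * \<delta>)"
      using z zw \<delta> by (simp add: c4_def)
    fix u :: real assume "0 \<le> u" "u \<le> 1"
    note Hfun_ge_cubic_quartic[OF z this, folded c3_def c4_def]
      and mult_cube_le_square_plus_fourth[OF zw \<delta>, of c3 "u - z"]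
    moreover have "(1 + \<delta>) * (u - z)^2 / (z * (1 - z)) = (u - z)^2 / (z * (1 - z)) + \<delta> * (u - z)^2 / (z * (1 - z))"
      "(c4 + c3^2 * (z * (1 - z)) / (4 * \<delta>)) * (u - z)^4 = c4 * (u - z)^4 + c3^2 * (z * (1 - z)) / (4 * \<delta>) * (u - z)^4"
      by (simp_all add: algebra_simps add_divide_distrib)
    ultimately show "Hfun z + dHfun z * (u - z) - (1 + \<delta>) * (u - z)^2 / (z * (1 - z))
        - (c4 + c3^2 * (z * (1 - z)) / (4 * \<delta>)) * (u - z)^4 \<le> Hfun u"
      by linarith
  qed
qed

lemma Hfun_has_real_derivative:
  "0 < z \<Longrightarrow> z < 1 \<Longrightarrow> (Hfun has_real_derivative dHfun z) (at z)"
  unfolding Hfun_def[abs_def] dHfun_def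
  by (rule derivative_eq_intros refl | simp)+

lemma dHfun_has_real_derivative:
  "0 < z \<Longrightarrow> z < 1 \<Longrightarrow> (dHfun has_real_derivative - 2 / (z * (1 - z))) (at z)"
  unfolding dHfun_def[abs_def] by (auto intro!: derivative_eq_intros simp: field_simps)

lemma continuous_on_mult_ln: "continuous_on {0..1} (\<lambda>x::real. x * ln x)"
proof -
  have "continuous (at x within {0..1}) (\<lambda>x::real. x * ln x)" if x: "x \<in> {0..1}" for x
  proof (cases "x = 0")
    case True
    have "((\<lambda>x::real. x * ln x) \<longlongrightarrow> 0) (at_right 0)"
      by real_asymp
    then show ?thesis
      using True by (simp add: continuous_within at_within_Icc_at_right)
  next
    case False
    then have "isCont (\<lambda>x::real. x * ln x) x"
      using x by (intro continuous_intros) auto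
    then show ?thesis
      by (rule continuous_at_imp_continuous_within)
  qed
  then show ?thesis
    by (simp add: continuous_on_eq_continuous_within)
qed

lemma continuous_on_Hfun: "continuous_on {0..1} Hfun"
proof -
  have "continuous_on {0..1} (\<lambda>x::real. (1 - x) * ln (1 - x))"
    by (rule continuous_on_compose2[OF continuous_on_mult_ln, of _ "\<lambda>x. 1 - x"])
      (auto intro: continuous_intros)
  then show ?thesis
    unfolding Hfun_def[abs_def] by (intro continuous_on_mult_left continuous_on_add continuous_on_mult_ln)
qed

section \<open>The lower function and the operator \<open>L_d\<close>\<close>

definition zcoord :: "real \<Rightarrow> real \<times> real \<Rightarrow> real" where
  "zcoord d x = (fst x + d * snd x) / (1 + d)"

lemma taulow_eq_Hfun_zcoord: "taulow d x = (d + 1) * Hfun (zcoord d x)"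
  by (simp add: taulow_def zcoord_def)

lemma zcoord_Amap: "zcoord d (Amap d \<kappa> N x) = zcoord d x"
  by (simp add: zcoord_def Amap_def Mmap_def algebra_simps)

lemma zcoord_in_unit_interval:
  assumes "0 < d" "x \<in> Dsq"
  shows "0 \<le> zcoord d x" "zcoord d x \<le> 1"
proof -
  have x: "0 \<le> fst x" "fst x \<le> 1" "0 \<le> snd x" "snd x \<le> 1"
    using assms(2) by (auto simp: Dsq_def)
  then have "0 \<le> d * snd x" "d * snd x \<le> d"
    using assms(1) mult_left_mono[of "snd x" 1 d] by auto
  then have "0 \<le> fst x + d * snd x" "fst x + d * snd x \<le> 1 + d"
    using x by linarith+
  then show "0 \<le> zcoord d x" "zcoord d x \<le> 1"
    using assms(1) by (simp_all add: zcoord_def)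
qed

lemma zcoord_strictly_inside:
  assumes d: "0 < d" and x: "x \<in> Dsq - {(0,0), (1,1)}"
  shows "0 < zcoord d x" "zcoord d x < 1"
proof -
  obtain x1 x2 where xx: "x = (x1, x2)"
    by (cases x)
  have r: "0 \<le> x1" "x1 \<le> 1" "0 \<le> x2" "x2 \<le> 1" "x1 = 0 \<longrightarrow> x2 \<noteq> 0" "x1 = 1 \<longrightarrow> x2 \<noteq> 1"
    using x by (auto simp: xx Dsq_def)
  have "0 < x1 + d * x2"
    using r d by (cases "x2 = 0") (auto intro: add_nonneg_pos)
  moreover have "x1 + d * x2 < 1 + d"
  proof (cases "x2 = 1")
    case False
    then have "d * x2 < d * 1"
      using r d by (intro mult_strict_left_mono) auto
    then show ?thesis using r by simp
  qed (use r in simp)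
  ultimately show "0 < zcoord d x" "zcoord d x < 1"
    using d by (simp_all add: zcoord_def xx)
qed

lemma continuous_on_taulow:
  assumes "0 < d"
  shows "continuous_on Dsq (taulow d)"
proof -
  have "continuous_on Dsq (zcoord d)"
    unfolding zcoord_def using assms by (intro continuous_intros) auto
  then have "continuous_on Dsq (\<lambda>x. Hfun (zcoord d x))"
    by (rule continuous_on_compose2[OF continuous_on_Hfun]) (use zcoord_in_unit_interval assms in auto)
  then show ?thesis
    unfolding taulow_eq_Hfun_zcoord by (intro continuous_intros)
qed

lemma taulow_corners: "taulow d (0, 0) = 0" "0 < d \<Longrightarrow> taulow d (1, 1) = 0"
  by (simp_all add: taulow_def Hfun_def)

lemma weighted_mult_one_minus_le:
  fixes P Q x y :: real
  assumes "0 \<le> P" "0 \<le> Q" "0 < P + Q"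
  defines "m \<equiv> (P * x + Q * y) / (P + Q)"
  shows "P * (x * (1 - x)) + Q * (y * (1 - y)) \<le> (P + Q) * (m * (1 - m))"
proof -
  have m: "(P + Q) * m = P * x + Q * y"
    using assms(3) by (simp add: m_def)
  have "(P + Q) * (m * (1 - m)) - (P * (x * (1 - x)) + Q * (y * (1 - y)))
      = P * x^2 + Q * y^2 - (P * x + Q * y) * m"
    using m by (simp add: algebra_simps power2_eq_square)
  also have "\<dots> = ((P * x^2 + Q * y^2) * (P + Q) - (P * x + Q * y)^2) / (P + Q)"
    using assms(3) by (simp add: m_def field_simps power2_eq_square)
  also have "(P * x^2 + Q * y^2) * (P + Q) - (P * x + Q * y)^2 = P * Q * (x - y)^2"
    by (simp add: algebra_simps power2_eq_square)
  finally have "(P + Q) * (m * (1 - m)) - (P * (x * (1 - x)) + Q * (y * (1 - y)))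
      = P * Q * (x - y)^2 / (P + Q)" .
  moreover have "0 \<le> P * Q * (x - y)^2 / (P + Q)"
    using assms by simp
  ultimately show ?thesis by linarith
qed

lemma deriv_Hfun_affine:
  fixes a b c t :: real
  assumes "0 < a + b * t" "a + b * t < 1"
  shows "deriv (\<lambda>s. c * Hfun (a + b * s)) t = c * b * dHfun (a + b * t)"
    and "deriv (deriv (\<lambda>s. c * Hfun (a + b * s))) t
           = - 2 * c * b^2 / ((a + b * t) * (1 - (a + b * t)))"
proof -
  define U where "U = {s. 0 < a + b * s \<and> a + b * s < 1}"
  have "open U"
    unfolding U_def by (intro open_Collect_conj open_Collect_less continuous_intros)
  have t: "t \<in> U"
    using assms by (simp add: U_def)
  have affine: "((\<lambda>s. a + b * s) has_real_derivative b) (at s)" for s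
    by (auto intro!: derivative_eq_intros)
  have D1: "((\<lambda>s. c * Hfun (a + b * s)) has_real_derivative c * b * dHfun (a + b * s)) (at s)"
    if "s \<in> U" for s
  proof -
    have "((\<lambda>s. c * Hfun (a + b * s)) has_real_derivative c * (dHfun (a + b * s) * b)) (at s)"
      by (rule DERIV_cmult[OF DERIV_chain2[OF Hfun_has_real_derivative affine]])
        (use that in \<open>auto simp: U_def\<close>)
    then show ?thesis
      by (simp add: mult_ac)
  qed
  show "deriv (\<lambda>s. c * Hfun (a + b * s)) t = c * b * dHfun (a + b * t)"
    by (rule DERIV_imp_deriv[OF D1[OF t]])
  have "((\<lambda>s. c * b * dHfun (a + b * s)) has_real_derivative
      - 2 * c * b^2 / ((a + b * t) * (1 - (a + b * t)))) (at t)"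
  proof -
    have "((\<lambda>s. c * b * dHfun (a + b * s)) has_real_derivative
        c * b * (- 2 / ((a + b * t) * (1 - (a + b * t))) * b)) (at t)"
      by (rule DERIV_cmult[OF DERIV_chain2[OF dHfun_has_real_derivative affine]]) (use assms in auto)
    moreover have "c * b * (- 2 / ((a + b * t) * (1 - (a + b * t))) * b)
        = - 2 * c * b^2 / ((a + b * t) * (1 - (a + b * t)))"
      by (simp add: power2_eq_square)
    ultimately show ?thesis
      by (simp only:)
  qed
  then have "(deriv (\<lambda>s. c * Hfun (a + b * s)) has_real_derivative
      - 2 * c * b^2 / ((a + b * t) * (1 - (a + b * t)))) (at t)"
    by (rule has_field_derivative_transform_within_open[OF _ \<open>open U\<close> t])
      (simp add: DERIV_imp_deriv[OF D1])
  then show "deriv (deriv (\<lambda>s. c * Hfun (a + b * s))) t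
      = - 2 * c * b^2 / ((a + b * t) * (1 - (a + b * t)))"
    by (rule DERIV_imp_deriv)
qed

lemma taulow_partial_derivatives:
  fixes d :: real and x :: "real \<times> real"
  defines "z \<equiv> zcoord d x"
  assumes d: "0 < d" and z: "0 < z" "z < 1"
  shows "d1 (taulow d) x = dHfun z" "d2 (taulow d) x = d * dHfun z"
    and "d11 (taulow d) x = - 2 / ((1 + d) * (z * (1 - z)))"
    and "d22 (taulow d) x = - 2 * d^2 / ((1 + d) * (z * (1 - z)))"
proof -
  obtain x1 x2 where xx: "x = (x1, x2)"
    by (cases x)
  have slice1: "(\<lambda>t. taulow d (t, x2)) = (\<lambda>t. (d + 1) * Hfun (d * x2 / (1 + d) + 1 / (1 + d) * t))"
    by (auto simp: taulow_def add_divide_distrib algebra_simps)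
  have slice2: "(\<lambda>t. taulow d (x1, t)) = (\<lambda>t. (d + 1) * Hfun (x1 / (1 + d) + d / (1 + d) * t))"
    by (auto simp: taulow_def add_divide_distrib)
  have z1: "d * x2 / (1 + d) + 1 / (1 + d) * x1 = z" and z2: "x1 / (1 + d) + d / (1 + d) * x2 = z"
    by (simp_all add: z_def zcoord_def xx add_divide_distrib)
  note D1 = deriv_Hfun_affine[of "d * x2 / (1 + d)" "1 / (1 + d)" x1 "d + 1", unfolded z1]
   and D2 = deriv_Hfun_affine[of "x1 / (1 + d)" "d / (1 + d)" x2 "d + 1", unfolded z2]
  have scale: "(d + 1) * (1 / (1 + d)) = 1" "(d + 1) * (d / (1 + d)) = d"
    using d by (simp_all add: field_simps)
  show "d1 (taulow d) x = dHfun z"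
    using D1(1) z scale by (simp only: d1_def xx fst_conv snd_conv slice1)
  show "d2 (taulow d) x = d * dHfun z"
    using D2(1) z scale by (simp only: d2_def xx fst_conv snd_conv slice2)
  have "d11 (taulow d) x = - 2 * (d + 1) * (1 / (1 + d))^2 / (z * (1 - z))"
    using D1(2) z by (simp only: d11_def xx fst_conv snd_conv slice1)
  also have "- 2 * (d + 1) * (1 / (1 + d))^2 = - 2 / (1 + d)"
    using d by (simp add: power2_eq_square divide_simps add.commute)
  finally show "d11 (taulow d) x = - 2 / ((1 + d) * (z * (1 - z)))"
    by (simp add: divide_divide_eq_left)
  have "d22 (taulow d) x = - 2 * (d + 1) * (d / (1 + d))^2 / (z * (1 - z))"
    using D2(2) z by (simp only: d22_def xx fst_conv snd_conv slice2)
  also have "- 2 * (d + 1) * (d / (1 + d))^2 = - 2 * d^2 / (1 + d)"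
    using d by (simp add: power2_eq_square divide_simps add.commute) (simp add: algebra_simps)
  finally show "d22 (taulow d) x = - 2 * d^2 / ((1 + d) * (z * (1 - z)))"
    by (simp add: divide_divide_eq_left)
qed

lemma Ld_taulow:
  fixes d :: real and x :: "real \<times> real"
  defines "z \<equiv> zcoord d x"
  assumes d: "0 < d" and z: "0 < z" "z < 1"
  shows "Ld d \<kappa> (taulow d) x
    = - (fst x * (1 - fst x) + d * (snd x * (1 - snd x))) / ((1 + d) * (z * (1 - z)))"
proof -
  obtain x1 x2 where xx: "x = (x1, x2)"
    by (cases x)
  note partials = taulow_partial_derivatives[OF d z[unfolded z_def], folded z_def]
  \<comment> \<open>the drift term vanishes: \<open>(1, d)\<close> is orthogonal to \<open>M x\<close>\<close>
  have "(d * x1 - d * x2) * dHfun z + (- x1 + x2) * (d * dHfun z) = 0"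
    by (simp add: algebra_simps)
  then have "Ld d \<kappa> (taulow d) x
      = x1 * (1 - x1) / 2 * (- 2 / ((1 + d) * (z * (1 - z))))
        + x2 * (1 - x2) / (2 * d) * (- 2 * d^2 / ((1 + d) * (z * (1 - z))))"
    by (simp add: Ld_def Mmap_def partials[unfolded xx] xx)
  also have "\<dots> = - (x1 * (1 - x1) + d * (x2 * (1 - x2))) / ((1 + d) * (z * (1 - z)))"
  proof -
    have "x1 * (1 - x1) / 2 * (- 2 / K) + x2 * (1 - x2) / (2 * d) * (- 2 * d^2 / K)
        = - (x1 * (1 - x1) + d * (x2 * (1 - x2))) / K" if "K \<noteq> 0" for K
      using d that by (simp add: field_simps power2_eq_square)
    then show ?thesis
      using d z by simp
  qed
  finally show ?thesis
    by (simp add: xx)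
qed

lemma neg_Ld_taulow_le_one:
  assumes d: "0 < d" and x: "x \<in> Dsq - {(0,0), (1,1)}"
  shows "- Ld d \<kappa> (taulow d) x \<le> 1"
proof -
  define z where "z = zcoord d x"
  have z: "0 < z" "z < 1"
    using zcoord_strictly_inside[OF d x] by (simp_all add: z_def)
  have "fst x * (1 - fst x) + d * (snd x * (1 - snd x)) \<le> (1 + d) * (z * (1 - z))"
    using weighted_mult_one_minus_le[of 1 d "fst x" "snd x"] d by (simp add: z_def zcoord_def)
  moreover have "- Ld d \<kappa> (taulow d) x
      = (fst x * (1 - fst x) + d * (snd x * (1 - snd x))) / ((1 + d) * (z * (1 - z)))"
    using Ld_taulow[OF d z[unfolded z_def]] by (simp add: z_def minus_divide_left)
  ultimately show ?thesis
    using z d by (simp add: divide_le_eq_1)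
qed

section \<open>Comparison through the discrete generators\<close>

lemma genq_taulow_eq:
  assumes d: "0 < d" and N: "0 < N" and N2: "real N2 = d * real N"
  shows "genq d \<kappa> N N2 (taulow d) x = (real N + real N2)
    * (binom_avg2 N N2 x (\<lambda>j1 j2. Hfun ((real j1 + real j2) / (real N + real N2))) - Hfun (zcoord d x))"
proof -
  have D: "real N + real N2 = (1 + d) * real N"
    using N2 by (simp add: algebra_simps)
  have grid: "taulow d (Amap d \<kappa> N (real j1 / real N, real j2 / real N2))
      = (d + 1) * Hfun ((real j1 + real j2) / (real N + real N2))" for j1 j2
  proof -
    have "zcoord d (real j1 / real N, real j2 / real N2) = (real j1 + real j2) / (real N + real N2)"
      using d N N2 by (simp add: zcoord_def D field_simps)
    then show ?thesis
      by (simp add: taulow_eq_Hfun_zcoord zcoord_Amap)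
  qed
  show ?thesis
    unfolding genq_def bern_eq_binom_avg2 comp_def grid binom_avg2_cmult
    by (simp add: taulow_eq_Hfun_zcoord D algebra_simps)
qed

lemma binom_avg2_Hfun_ge_moments:
  fixes N1 N2 :: nat and x :: "real \<times> real"
  defines "D \<equiv> real N1 + real N2"
  defines "z \<equiv> (real N1 * fst x + real N2 * snd x) / D"
  defines "S \<equiv> \<lambda>j1 j2. (real j1 - real N1 * fst x) + (real j2 - real N2 * snd x)"
  assumes x: "x \<in> Dsq" and D: "0 < D"
    and H: "\<And>u. 0 \<le> u \<Longrightarrow> u \<le> 1 \<Longrightarrow>
      Hfun z + dHfun z * (u - z) - (1 + \<delta>) * (u - z)^2 / (z * (1 - z)) - C * (u - z)^4 \<le> Hfun u"
  shows "Hfun z - (1 + \<delta>) / (z * (1 - z) * D^2)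
        * (real N1 * fst x * (1 - fst x) + real N2 * snd x * (1 - snd x))
      - C / D^4 * binom_avg2 N1 N2 x (\<lambda>j1 j2. (S j1 j2)^4)
    \<le> binom_avg2 N1 N2 x (\<lambda>j1 j2. Hfun ((real j1 + real j2) / D))"
proof -
  define a1 a2 a4 where "a1 = dHfun z / D" and "a2 = (1 + \<delta>) / (z * (1 - z) * D^2)"
    and "a4 = C / D^4"
  have pointwise: "Hfun z + a1 * S j1 j2 - a2 * (S j1 j2)^2 - a4 * (S j1 j2)^4
      \<le> Hfun ((real j1 + real j2) / D)" if "j1 \<le> N1" "j2 \<le> N2" for j1 j2
  proof -
    define u where "u = (real j1 + real j2) / D"
    have u: "0 \<le> u" "u \<le> 1"
      using that D by (auto simp: u_def D_def field_simps)
    have "u - z = S j1 j2 / D"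
      using D by (simp add: u_def z_def S_def diff_divide_distrib algebra_simps)
    then have "dHfun z * (u - z) = a1 * S j1 j2"
        "(1 + \<delta>) * (u - z)^2 / (z * (1 - z)) = a2 * (S j1 j2)^2" "C * (u - z)^4 = a4 * (S j1 j2)^4"
      by (simp_all add: a1_def a2_def a4_def power_divide)
    then show ?thesis
      using H[OF u] by (simp add: u_def)
  qed
  have "binom_avg2 N1 N2 x (\<lambda>j1 j2. Hfun z + a1 * S j1 j2 - a2 * (S j1 j2)^2 - a4 * (S j1 j2)^4)
      \<le> binom_avg2 N1 N2 x (\<lambda>j1 j2. Hfun ((real j1 + real j2) / D))"
    by (rule binom_avg2_mono[OF x pointwise])
  moreover have "binom_avg2 N1 N2 x (\<lambda>j1 j2. Hfun z + a1 * S j1 j2 - a2 * (S j1 j2)^2 - a4 * (S j1 j2)^4)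
      = Hfun z - a2 * (real N1 * fst x * (1 - fst x) + real N2 * snd x * (1 - snd x))
        - a4 * binom_avg2 N1 N2 x (\<lambda>j1 j2. (S j1 j2)^4)"
    using binom_avg2_sum_deviation_moments(1,2)[of N1 N2 x]
    by (simp add: binom_avg2_diff binom_avg2_add binom_avg2_cmult binom_avg2_const S_def)
  ultimately show ?thesis
    by (simp add: a2_def a4_def)
qed

lemma binom_avg2_Hfun_ge:
  fixes N1 N2 :: nat and x :: "real \<times> real"
  defines "D \<equiv> real N1 + real N2"
  defines "z \<equiv> (real N1 * fst x + real N2 * snd x) / D"
  assumes x: "x \<in> Dsq" and D: "0 < D" and z: "0 < z" "z < 1" and \<delta>: "0 \<le> \<delta>" and C: "0 \<le> C"
    and H: "\<And>u. 0 \<le> u \<Longrightarrow> u \<le> 1 \<Longrightarrow>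
      Hfun z + dHfun z * (u - z) - (1 + \<delta>) * (u - z)^2 / (z * (1 - z)) - C * (u - z)^4 \<le> Hfun u"
  shows "- (1 + \<delta>) - 8 * C / D
    \<le> D * (binom_avg2 N1 N2 x (\<lambda>j1 j2. Hfun ((real j1 + real j2) / D)) - Hfun z)"
proof -
  define V where "V = real N1 * fst x * (1 - fst x) + real N2 * snd x * (1 - snd x)"
  define E4 where "E4 = binom_avg2 N1 N2 x
    (\<lambda>j1 j2. ((real j1 - real N1 * fst x) + (real j2 - real N2 * snd x))^4)"
  define w where "w = z * (1 - z)"
  have w: "0 < w"
    using z by (simp add: w_def)
  have "V \<le> D * w"
    using weighted_mult_one_minus_le[of "real N1" "real N2" "fst x" "snd x"] D
    by (simp add: V_def D_def w_def z_def)
  then have "V / (D * w) \<le> 1"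
    using D w by simp
  then have variance: "D * ((1 + \<delta>) / (w * D^2) * V) \<le> 1 + \<delta>"
    using D w \<delta> mult_left_mono[of "V / (D * w)" 1 "1 + \<delta>"]
    by (simp add: power2_eq_square mult.commute)
  have "E4 \<le> 8 * (real N1 ^ 2 + real N2 ^ 2)"
    using binom_avg2_sum_deviation_moments(3)[OF x] by (simp add: E4_def)
  also have "\<dots> \<le> 8 * D^2"
    by (simp add: D_def power2_eq_square algebra_simps)
  finally have "D * (C / D^4 * E4) \<le> D * (C / D^4 * (8 * D^2))"
    using D C by (intro mult_left_mono) auto
  also have "D * (C / D^4 * (8 * D^2)) = 8 * C / D"
    using D by (simp add: power2_eq_square power4_eq_xxxx field_simps)
  finally have fourth: "D * (C / D^4 * E4) \<le> 8 * C / D" .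
  have "D * (Hfun z - (1 + \<delta>) / (w * D^2) * V - C / D^4 * E4 - Hfun z)
      \<le> D * (binom_avg2 N1 N2 x (\<lambda>j1 j2. Hfun ((real j1 + real j2) / D)) - Hfun z)"
    using binom_avg2_Hfun_ge_moments[of x N1 N2 \<delta> C] x D H
    by (intro mult_left_mono) (auto simp: V_def E4_def w_def D_def z_def)
  moreover have "D * (Hfun z - (1 + \<delta>) / (w * D^2) * V - C / D^4 * E4 - Hfun z)
      = - (D * ((1 + \<delta>) / (w * D^2) * V)) - D * (C / D^4 * E4)"
    by (simp add: algebra_simps)
  ultimately show ?thesis
    using variance fourth by linarith
qed

lemma genq_taulow_ge:
  assumes d: "0 < d" and x: "x \<in> Dsq - {(0,0), (1,1)}" and \<delta>: "0 < \<delta>"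
  obtains C where "0 \<le> C"
    and "\<And>N N2. 0 < N \<Longrightarrow> real N2 = d * real N \<Longrightarrow>
      - (1 + \<delta>) - C / real N \<le> genq d \<kappa> N N2 (taulow d) x"
proof -
  define z where "z = zcoord d x"
  have z: "0 < z" "z < 1"
    using zcoord_strictly_inside[OF d x] by (simp_all add: z_def)
  obtain C where C: "0 \<le> C" and H: "\<And>u. 0 \<le> u \<Longrightarrow> u \<le> 1 \<Longrightarrow>
      Hfun z + dHfun z * (u - z) - (1 + \<delta>) * (u - z)^2 / (z * (1 - z)) - C * (u - z)^4 \<le> Hfun u"
    using Hfun_ge_quartic[OF z \<delta>] by blast
  show ?thesis
  proof (rule that[of "8 * C"])
    show "0 \<le> 8 * C"
      using C by simp
    fix N N2 assume N: "0 < N" and N2: "real N2 = d * real N"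
    define D where "D = real N + real N2"
    have D: "real N \<le> D" "0 < D"
      using N N2 d by (simp_all add: D_def)
    have "real N * fst x + real N2 * snd x = real N * (fst x + d * snd x)"
      "D = real N * (1 + d)"
      by (simp_all add: D_def N2 algebra_simps)
    then have "(real N * fst x + real N2 * snd x) / D = z"
      using N by (simp add: z_def zcoord_def)
    then have "- (1 + \<delta>) - 8 * C / D \<le> genq d \<kappa> N N2 (taulow d) x"
      using binom_avg2_Hfun_ge[of x N N2 \<delta> C] x D(2) z \<delta> C H
      by (simp add: genq_taulow_eq[OF d N N2] D_def z_def)
    moreover have "8 * C / D \<le> 8 * C / real N"
      using C D N by (intro divide_left_mono) auto
    ultimately show "- (1 + \<delta>) - 8 * C / real N \<le> genq d \<kappa> N N2 (taulow d) x"
      by linarith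
  qed
qed

lemma Amap_in_Dsq:
  assumes d: "0 < d" "d \<le> 1" and \<kappa>: "0 \<le> \<kappa>" "\<kappa> \<le> real N" and y: "y \<in> Dsq"
  shows "Amap d \<kappa> N y \<in> Dsq"
proof -
  define k where "k = \<kappa> / real N"
  have k: "0 \<le> k" "k \<le> 1"
    using \<kappa> by (auto simp: k_def divide_le_eq_1)
  then have kd: "0 \<le> k * d" "k * d \<le> 1"
    using d by (auto intro: mult_le_one)
  have "Amap d \<kappa> N y = ((1 - k * d) * fst y + (k * d) * snd y, (1 - k) * snd y + k * fst y)"
    by (simp add: Amap_def Mmap_def k_def algebra_simps)
  moreover have "fst y \<in> {0..1}" "snd y \<in> {0..1}"
    using y by (auto simp: Dsq_def)
  ultimately show ?thesis
    using convexD_alt[of "{0..1::real}" "fst y" "snd y" "k * d"]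
      convexD_alt[of "{0..1::real}" "snd y" "fst y" k] k kd
    by (simp add: Dsq_def)
qed

lemma genq_nonpos_at_max:
  assumes d: "0 < d" "d \<le> 1" and \<kappa>: "0 \<le> \<kappa>" "\<kappa> \<le> real N"
    and x: "x \<in> Dsq" and max: "\<And>y. y \<in> Dsq \<Longrightarrow> w y \<le> w x"
  shows "genq d \<kappa> N N2 w x \<le> 0"
proof -
  have "bern N N2 (w \<circ> Amap d \<kappa> N) x \<le> binom_avg2 N N2 x (\<lambda>j1 j2. w x)"
    unfolding bern_eq_binom_avg2
  proof (rule binom_avg2_mono[OF x])
    fix j1 j2 assume "j1 \<le> N" "j2 \<le> N2"
    then have "(real j1 / real N, real j2 / real N2) \<in> Dsq"
      by (auto simp: Dsq_def divide_le_eq_1)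
    then show "(w \<circ> Amap d \<kappa> N) (real j1 / real N, real j2 / real N2) \<le> w x"
      using max Amap_in_Dsq[OF d \<kappa>] by simp
  qed
  then show ?thesis
    by (simp add: genq_def binom_avg2_const mult_nonpos_nonneg)
qed

lemma compact_Dsq: "compact Dsq"
  unfolding Dsq_def by (intro compact_Times compact_Icc)

lemma discrete_maximum_principle:
  assumes d: "0 < d" "d \<le> 1" and \<kappa>: "0 \<le> \<kappa>"
    and cont: "continuous_on Dsq w" and corners: "w (0,0) \<le> 0" "w (1,1) \<le> 0"
    and pos: "\<And>x. x \<in> Dsq - {(0,0), (1,1)} \<Longrightarrow> \<exists>N N2. \<kappa> \<le> real N \<and> 0 < genq d \<kappa> N N2 w x"
    and y: "y \<in> Dsq"
  shows "w y \<le> 0"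
proof (rule ccontr)
  assume "\<not> w y \<le> 0"
  obtain x where x: "x \<in> Dsq" and max: "\<And>y. y \<in> Dsq \<Longrightarrow> w y \<le> w x"
    using continuous_attains_sup[OF compact_Dsq _ cont] y by blast
  have "0 < w x"
    using max[OF y] \<open>\<not> w y \<le> 0\<close> by simp
  then have "x \<in> Dsq - {(0,0), (1,1)}"
    using x corners by auto
  then obtain N N2 where N: "\<kappa> \<le> real N" and "0 < genq d \<kappa> N N2 w x"
    using pos by blast
  moreover have "genq d \<kappa> N N2 w x \<le> 0"
    using d \<kappa> N x max by (rule genq_nonpos_at_max)
  ultimately show False
    by linarith
qed

lemma obtain_large_nat_clearing_denominator:
  fixes d B :: real
  assumes "d \<in> \<rat>" "0 < d"
  obtains N N2 :: nat where "B \<le> real N" "real N2 = d * real N"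
proof -
  obtain p q :: nat where q: "q \<noteq> 0" and pq: "\<bar>d\<bar> = real p / real q"
    using Rats_abs_nat_div_natE[OF assms(1)] by metis
  define M where "M = nat \<lceil>B\<rceil>"
  have "B \<le> real M"
    unfolding M_def by linarith
  also have "\<dots> \<le> real (q * M)"
    using q by (simp only: of_nat_le_iff) simp
  finally show ?thesis
    by (rule that[of "q * M" "p * M"]) (use q pq assms(2) in simp)
qed

lemma genq_scale_diff:
  "genq d \<kappa> N N2 (\<lambda>y. c * f y - g y) x = c * genq d \<kappa> N N2 f x - genq d \<kappa> N N2 g x"
  unfolding genq_def bern_eq_binom_avg2 comp_def
  by (simp add: binom_avg2_diff binom_avg2_cmult algebra_simps)

lemma genq_scaled_taulow_minus_tau_pos:
  fixes d \<kappa> \<eta> :: real and \<tau> :: "real \<times> real \<Rightarrow> real"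
  assumes d: "0 < d" "d \<in> \<rat>" and \<kappa>: "0 < \<kappa>"
    and genq_\<tau>: "\<And>K. compact K \<Longrightarrow> K \<subseteq> Dsq - {(0,0), (1,1)} \<Longrightarrow>
        \<forall>\<epsilon>>0. \<exists>N0. \<forall>N N2. N \<ge> N0 \<and> real N2 = d * real N \<longrightarrow>
           (\<forall>x\<in>K. \<bar>genq d \<kappa> N N2 \<tau> x + 1\<bar> < \<epsilon>)"
    and \<eta>: "0 < \<eta>" "\<eta> < 1" and y: "y \<in> Dsq - {(0,0), (1,1)}"
  shows "\<exists>N N2. \<kappa> \<le> real N \<and> 0 < genq d \<kappa> N N2 (\<lambda>y. (1 - \<eta>) * taulow d y - \<tau> y) y"
proof -
  define \<delta> where "\<delta> = \<eta> / 4"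
  have \<delta>: "0 < \<delta>"
    using \<eta> by (simp add: \<delta>_def)
  obtain C where C: "0 \<le> C" and taulow_ge: "\<And>N N2. 0 < N \<Longrightarrow> real N2 = d * real N \<Longrightarrow>
      - (1 + \<delta>) - C / real N \<le> genq d \<kappa> N N2 (taulow d) y"
    using genq_taulow_ge[OF d(1) y \<delta>] by metis
  obtain N0 where N0: "\<And>N N2. N0 \<le> N \<Longrightarrow> real N2 = d * real N \<Longrightarrow> \<bar>genq d \<kappa> N N2 \<tau> y + 1\<bar> < \<delta>"
    using genq_\<tau>[of "{y}"] y \<delta> by fastforce
  obtain N N2 where N: "real N0 + \<kappa> + C / \<delta> + 1 \<le> real N" and N2: "real N2 = d * real N"
    using obtain_large_nat_clearing_denominator[OF d(2,1)] by metis
  have "0 \<le> C / \<delta>"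
    using C \<delta> by simp
  then have "real N0 \<le> real N" "1 \<le> real N" "\<kappa> \<le> real N" "C / \<delta> \<le> real N"
    using N \<kappa> by linarith+
  then have N_pos: "0 < N" and "N0 \<le> N" and "C / real N \<le> \<delta>"
    using \<delta> by (simp_all add: pos_divide_le_eq mult.commute)
  then have "- (1 + 2 * \<delta>) \<le> genq d \<kappa> N N2 (taulow d) y"
    using taulow_ge[OF N_pos N2] by linarith
  then have "(1 - \<eta>) * - (1 + 2 * \<delta>) \<le> (1 - \<eta>) * genq d \<kappa> N N2 (taulow d) y"
    using \<eta> by (intro mult_left_mono) auto
  moreover have "genq d \<kappa> N N2 \<tau> y < -1 + \<delta>"
    using N0[OF \<open>N0 \<le> N\<close> N2] by linarith
  moreover have "(1 - \<eta>) * - (1 + 2 * \<delta>) + 1 - \<delta> = \<eta> / 4 + \<eta>^2 / 2"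
    by (simp add: \<delta>_def field_simps power2_eq_square)
  moreover have "0 < \<eta> / 4 + \<eta>^2 / 2"
    using \<eta> by (simp add: add_pos_nonneg)
  ultimately have "0 < genq d \<kappa> N N2 (\<lambda>y. (1 - \<eta>) * taulow d y - \<tau> y) y"
    unfolding genq_scale_diff by linarith
  then show ?thesis
    using \<open>\<kappa> \<le> real N\<close> by blast
qed

lemma scaled_taulow_le_tau:
  fixes d \<kappa> \<eta> :: real and \<tau> :: "real \<times> real \<Rightarrow> real"
  assumes d: "0 < d" "d \<le> 1" "d \<in> \<rat>" and \<kappa>: "0 < \<kappa>" and \<tau>: "inE \<tau>"
    and genq_\<tau>: "\<And>K. compact K \<Longrightarrow> K \<subseteq> Dsq - {(0,0), (1,1)} \<Longrightarrow>
        \<forall>\<epsilon>>0. \<exists>N0. \<forall>N N2. N \<ge> N0 \<and> real N2 = d * real N \<longrightarrow>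
           (\<forall>x\<in>K. \<bar>genq d \<kappa> N N2 \<tau> x + 1\<bar> < \<epsilon>)"
    and \<eta>: "0 < \<eta>" "\<eta> < 1" and x: "x \<in> Dsq"
  shows "(1 - \<eta>) * taulow d x \<le> \<tau> x"
proof -
  have "(\<lambda>y. (1 - \<eta>) * taulow d y - \<tau> y) x \<le> 0"
  proof (rule discrete_maximum_principle[OF d(1,2) _ _ _ _ _ x])
    show "0 \<le> \<kappa>"
      using \<kappa> by simp
    show "continuous_on Dsq (\<lambda>y. (1 - \<eta>) * taulow d y - \<tau> y)"
      using continuous_on_taulow[OF d(1)] \<tau> unfolding inE_def by (intro continuous_intros) auto
    show "(\<lambda>y. (1 - \<eta>) * taulow d y - \<tau> y) (0,0) \<le> 0" "(\<lambda>y. (1 - \<eta>) * taulow d y - \<tau> y) (1,1) \<le> 0"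
      using \<tau> d by (simp_all add: inE_def taulow_corners)
  qed (rule genq_scaled_taulow_minus_tau_pos[OF d(1,3) \<kappa> genq_\<tau> \<eta>])
  then show ?thesis
    by simp
qed

lemma le_if_scaled_le:
  fixes a b :: real
  assumes "\<And>\<eta>. 0 < \<eta> \<Longrightarrow> \<eta> < 1 \<Longrightarrow> (1 - \<eta>) * a \<le> b"
  shows "a \<le> b"
proof (rule tendsto_upperbound)
  show "((\<lambda>\<eta>. (1 - \<eta>) * a) \<longlongrightarrow> a) (at_right 0)"
    by (auto intro!: tendsto_eq_intros)
  show "\<forall>\<^sub>F \<eta> in at_right 0. (1 - \<eta>) * a \<le> b"
    using assms by (auto simp: eventually_at_right[of 0 1] intro!: exI[of _ 1])
qed simp

theorem theorem4:
  fixes d \<kappa> :: real and \<tau> :: "real \<times> real \<Rightarrow> real"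
  assumes d_pos: "0 < d" and d_le: "d \<le> 1" and d_rat: "d \<in> \<rat>"
    and kappa_pos: "0 < \<kappa>"
    and tau_E: "inE \<tau>"
    and tau_eq: "\<And>K. compact K \<Longrightarrow> K \<subseteq> Dsq - {(0,0), (1,1)} \<Longrightarrow>
        \<forall>\<epsilon>>0. \<exists>N0. \<forall>N N2. N \<ge> N0 \<and> real N2 = d * real N \<longrightarrow>
           (\<forall>x\<in>K. \<bar>genq d \<kappa> N N2 \<tau> x + 1\<bar> < \<epsilon>)"
  shows "(\<forall>x \<in> Dsq - {(0,0), (1,1)}. - Ld d \<kappa> (taulow d) x \<le> 1)
         \<and> (\<forall>x \<in> Dsq. taulow d x \<le> \<tau> x)"
proof (intro conjI ballI)
  show "- Ld d \<kappa> (taulow d) x \<le> 1" if "x \<in> Dsq - {(0,0), (1,1)}" for x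
    using neg_Ld_taulow_le_one[OF d_pos that] .
  show "taulow d x \<le> \<tau> x" if "x \<in> Dsq" for x
    using scaled_taulow_le_tau[OF d_pos d_le d_rat kappa_pos tau_E tau_eq _ _ that]
    by (rule le_if_scaled_le)
qed

end
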